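(* Let $\lambda>0$ not be a fusion value. Let $\lambda_1$ be the largest fusion value smaller than $\lambda$ (or $\lambda_1=0$ if none exists), and let $C_1,\dots,C_K$ be the clusters of $\mathbf x^*(\lambda_1)$ (all singletons if $\lambda_1=0$). Let $(\hat{\mathbf x}_1,\dots,\hat{\mathbf x}_K)$ be the minimizer of the reduced problem (R$_\lambda$). Then $\hat{\mathbf x}_k\ne\hat{\mathbf x}_{k'}$ for all $k\ne k'$ in $[K]$.
   Context: Data: $n\ge2$, $d\ge1$, $\mathbf a_1,\dots,\mathbf a_n\in\mathbb R^d$, weights $r_i>0$. For $\lambda\ge0$, (P$_\lambda$): minimize $\frac12\sum_ir_i\|\mathbf x_i-\mathbf a_i\|^2+\lambda\sum_{i<j}r_ir_j\|\mathbf x_i-\mathbf x_j\|$ over $(\mathbb R^d)^n$, unique minimizer $\mathbf x^*(\lambda)$; the clusters of $\mathbf x^*(\lambda)$ are the classes of $i\sim j\iff\mathbf x_i^*(\lambda)=\mathbf x_j^*(\lambda)$. A value $\lambda_0>0$ is a fusion value if there are $i\ne j$ with $\mathbf x_i^*(\lambda_0)=\mathbf x_j^*(\lambda_0)$ but $\mathbf x_i^*(\lambda)\ne\mathbf x_j^*(\lambda)$ for all $\lambda\in[0,\lambda_0)$ (there are finitely many). Given a partition $C_1,\dots,C_K$ of $[n]$, set $r'_k:=\sum_{i\in C_k}r_i$, $\bar{\mathbf a}_k:=\frac1{r'_k}\sum_{i\in C_k}r_i\mathbf a_i$, and the reduced problem (R$_\lambda$): minimize over $\mathbf x_1,\dots,\mathbf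 x_K\in\mathbb R^d$ the function $\frac12\sum_kr'_k\|\mathbf x_k-\bar{\mathbf a}_k\|^2+\lambda\sum_{k<k'}r'_kr'_{k'}\|\mathbf x_k-\mathbf x_{k'}\|$. *)

theory Defs
  imports "HOL-Analysis.Analysis" "HOL-Library.FuncSet"
begin

definition cc_obj :: "nat set \<Rightarrow> (nat \<Rightarrow> real) \<Rightarrow> (nat \<Rightarrow> 'a::real_normed_vector)
    \<Rightarrow> real \<Rightarrow> (nat \<Rightarrow> 'a) \<Rightarrow> real" where
  "cc_obj I w c lam x =
     (1/2) * (\<Sum>i\<in>I. w i * (norm (x i - c i))^2)
     + lam * (\<Sum>(i,j)\<in>{(i,j). i \<in> I \<and> j \<in> I \<and> i < j}. w i * w j * norm (x i - x j))"

definition cc_sol :: "nat \<Rightarrow> (nat \<Rightarrow> real) \<Rightarrow> (nat \<Rightarrow> 'a::real_normed_vector) \<Rightarrow> real \<Rightarrow> (nat \<Rightarrow> 'a)" where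
  "cc_sol n r a lam = (THE x. x \<in> {..<n} \<rightarrow>\<^sub>E UNIV \<and>
       (\<forall>y. cc_obj {..<n} r a lam x \<le> cc_obj {..<n} r a lam y))"

definition fusion_value :: "nat \<Rightarrow> (nat \<Rightarrow> real) \<Rightarrow> (nat \<Rightarrow> 'a::real_normed_vector) \<Rightarrow> real \<Rightarrow> bool" where
  "fusion_value n r a lam0 \<longleftrightarrow> lam0 > 0 \<and>
     (\<exists>i<n. \<exists>j<n. i \<noteq> j \<and> cc_sol n r a lam0 i = cc_sol n r a lam0 j \<and>
        (\<forall>lam. 0 \<le> lam \<and> lam < lam0 \<longrightarrow> cc_sol n r a lam i \<noteq> cc_sol n r a lam j))"

definition clusters :: "nat \<Rightarrow> (nat \<Rightarrow> 'a) \<Rightarrow> nat set set" where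
  "clusters n x = {..<n} // {(i,j). i < n \<and> j < n \<and> x i = x j}"

definition red_w :: "(nat \<Rightarrow> real) \<Rightarrow> (nat \<Rightarrow> nat set) \<Rightarrow> nat \<Rightarrow> real" where
  "red_w r C k = (\<Sum>i\<in>C k. r i)"

definition red_a :: "(nat \<Rightarrow> real) \<Rightarrow> (nat \<Rightarrow> 'a::real_vector) \<Rightarrow> (nat \<Rightarrow> nat set) \<Rightarrow> nat \<Rightarrow> 'a" where
  "red_a r a C k = (1 / red_w r C k) *\<^sub>R (\<Sum>i\<in>C k. r i *\<^sub>R a i)"

end

(*
  Writing the objective as fit/2 + lam/2 * pen, with pen the penalty summed over all ordered
  pairs, it is strongly convex, so x*(lam) is well defined and moves continuously with lam:
  r_i |x*(nu)_i - x*(mu)_i|^2 <= (nu - mu) pen(x*(mu)) for mu <= nu.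

  Fusions are never undone. Let B be a cluster of x*(mu) and nu >= mu. Replacing x*(nu) on B
  by its weighted mean lowers the penalty by the spread W of x*(nu) inside B and changes the
  fit by N - 2A, where N is the weighted squared deviation from the mean. Perturbing x*(mu)
  along these balanced deviations changes the distances from B to the other points only to
  second order, so its minimality gives A <= mu W / 2; minimality of x*(nu) then forces N = 0.

  Hence x*(lam) is constant on the clusters C_k of x*(lam1). On such points the full objective
  is the reduced one plus a constant, so by uniqueness xh_k is the value of x*(lam) on C_k.
  If xh_k = xh_k' with k <> k', points of C_k and C_k' are apart at lam1 and fused at lam. By
  continuity the infimum of their fusion parameters is attained, and it is a fusion value in
  (lam1, lam], contradicting the choice of lam1 and lam.
*)

theory Submission
  imports Defs
begin

definition cc_fit :: "nat set \<Rightarrow> (nat \<Rightarrow> real) \<Rightarrow> (nat \<Rightarrow> 'a::real_normed_vector) \<Rightarrow> (nat \<Rightarrow> 'a) \<Rightarrow> real" where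
  "cc_fit I w c x = (\<Sum>i\<in>I. w i * (norm (x i - c i))^2)"

definition cc_pen :: "nat set \<Rightarrow> (nat \<Rightarrow> real) \<Rightarrow> (nat \<Rightarrow> 'a::real_normed_vector) \<Rightarrow> real" where
  "cc_pen I w x = (\<Sum>i\<in>I. \<Sum>j\<in>I. w i * w j * norm (x i - x j))"

lemma sum_sum_symmetric:
  fixes f :: "nat \<Rightarrow> nat \<Rightarrow> real"
  assumes I: "finite I" and sym: "\<And>i j. f i j = f j i" and diag: "\<And>i. f i i = 0"
  shows "(\<Sum>i\<in>I. \<Sum>j\<in>I. f i j) = 2 * (\<Sum>(i,j)\<in>{(i,j). i \<in> I \<and> j \<in> I \<and> i < j}. f i j)"
proof -
  have row: "(\<Sum>j\<in>I. f i j) = (\<Sum>j\<in>{j\<in>I. i<j}. f i j) + (\<Sum>j\<in>{j\<in>I. j<i}. f i j)" for i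
  proof -
    have "I = {j\<in>I. i<j} \<union> {j\<in>I. j<i} \<union> {j\<in>I. j = i}" by auto
    then have "(\<Sum>j\<in>I. f i j) = (\<Sum>j\<in>{j\<in>I. i<j} \<union> {j\<in>I. j<i} \<union> {j\<in>I. j = i}. f i j)" by simp
    also have "\<dots> = (\<Sum>j\<in>{j\<in>I. i<j}. f i j) + (\<Sum>j\<in>{j\<in>I. j<i}. f i j) + (\<Sum>j\<in>{j\<in>I. j = i}. f i j)"
      using I by (subst sum.union_disjoint, auto)+
    also have "(\<Sum>j\<in>{j\<in>I. j = i}. f i j) = 0" by (rule sum.neutral) (auto simp: diag)
    finally show ?thesis by simp
  qed
  have "(\<Sum>i\<in>I. \<Sum>j\<in>{j\<in>I. j<i}. f i j) = (\<Sum>j\<in>I. \<Sum>i\<in>{i\<in>I. j<i}. f i j)"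
    using sum.swap_restrict[OF I I, of f "\<lambda>i j. j < i"] by simp
  also have "\<dots> = (\<Sum>i\<in>I. \<Sum>j\<in>{j\<in>I. i<j}. f i j)" by (simp add: sym)
  finally have "(\<Sum>i\<in>I. \<Sum>j\<in>I. f i j) = 2 * (\<Sum>i\<in>I. \<Sum>j\<in>{j\<in>I. i<j}. f i j)"
    by (simp add: row sum.distrib)
  moreover have "{(i,j). i \<in> I \<and> j \<in> I \<and> i < j} = Sigma I (\<lambda>i. {j\<in>I. i<j})" by auto
  ultimately show ?thesis using I by (simp add: sum.Sigma)
qed

lemma cc_obj_eq:
  assumes "finite I"
  shows "cc_obj I w c lam x = cc_fit I w c x / 2 + lam / 2 * cc_pen I w x"
  unfolding cc_obj_def cc_fit_def cc_pen_def
  by (subst sum_sum_symmetric[OF assms]) (auto simp: norm_minus_commute)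

lemma cc_pen_nonneg: "(\<And>i. i \<in> I \<Longrightarrow> w i \<ge> 0) \<Longrightarrow> cc_pen I w x \<ge> 0"
  unfolding cc_pen_def by (intro sum_nonneg) auto

lemma cc_obj_nonneg:
  assumes "\<And>i. i \<in> I \<Longrightarrow> w i \<ge> 0" "mu \<ge> 0"
  shows "cc_obj I w c mu x \<ge> 0"
  unfolding cc_obj_def using assms by (intro add_nonneg_nonneg mult_nonneg_nonneg sum_nonneg) auto

lemma cc_obj_cong:
  "finite I \<Longrightarrow> (\<And>i. i \<in> I \<Longrightarrow> x i = y i) \<Longrightarrow> cc_obj I w c lam x = cc_obj I w c lam y"
  unfolding cc_obj_eq cc_fit_def cc_pen_def by (simp cong: sum.cong)

lemma cc_obj_ge_coordinate:
  assumes "finite I" "\<And>i. i \<in> I \<Longrightarrow> w i \<ge> 0" "mu \<ge> 0" "k \<in> I"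
  shows "w k * (norm (x k - c k))^2 / 2 \<le> cc_obj I w c mu x"
proof -
  have "w k * (norm (x k - c k))^2 \<le> cc_fit I w c x"
    unfolding cc_fit_def using assms by (intro member_le_sum) auto
  moreover have "mu * cc_pen I w x \<ge> 0" using cc_pen_nonneg[of I w x] assms by simp
  ultimately show ?thesis unfolding cc_obj_eq[OF assms(1)] by linarith
qed

lemma norm_add_scaleR_power2:
  fixes u d :: "'a::real_inner"
  shows "(norm (u + s *\<^sub>R d))^2 = (norm u)^2 + 2 * s * (u \<bullet> d) + s^2 * (norm d)^2"
  unfolding power2_norm_eq_inner
  by (simp add: inner_add_left inner_add_right inner_commute algebra_simps power2_eq_square)

lemma le_of_le_add_mult:
  fixes A B M :: real
  assumes "M \<ge> 0" and "\<And>s. 0 < s \<Longrightarrow> s \<le> 1 \<Longrightarrow> A \<le> B + s * M"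
  shows "A \<le> B"
proof (rule field_le_epsilon)
  fix e :: real assume e: "e > 0"
  define s where "s = min 1 (e / (M + 1))"
  have s: "0 < s" "s \<le> 1" using e assms(1) by (auto simp: s_def)
  have "s * M \<le> e / (M + 1) * M" using assms(1) by (intro mult_right_mono) (auto simp: s_def)
  also have "\<dots> \<le> e" using e assms(1) by (simp add: field_simps)
  finally show "A \<le> B + e" using assms(2)[OF s] by linarith
qed

lemma cc_fit_segment:
  fixes x y c :: "nat \<Rightarrow> 'a::real_inner"
  shows "cc_fit I w c (\<lambda>i. x i + s *\<^sub>R (y i - x i)) = cc_fit I w c x
     + 2 * s * (\<Sum>i\<in>I. w i * ((x i - c i) \<bullet> (y i - x i))) + s^2 * (\<Sum>i\<in>I. w i * (norm (y i - x i))^2)"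
proof -
  have shift: "x i + s *\<^sub>R (y i - x i) - c i = (x i - c i) + s *\<^sub>R (y i - x i)" for i
    by (simp add: algebra_simps)
  have "cc_fit I w c (\<lambda>i. x i + s *\<^sub>R (y i - x i))
     = (\<Sum>i\<in>I. w i * (norm (x i - c i))^2 + 2 * s * (w i * ((x i - c i) \<bullet> (y i - x i)))
          + s^2 * (w i * (norm (y i - x i))^2))"
    unfolding cc_fit_def by (intro sum.cong refl) (simp only: shift norm_add_scaleR_power2, algebra)
  then show ?thesis by (simp add: sum.distrib cc_fit_def sum_distrib_left)
qed

lemma cc_pen_segment_le:
  fixes x y :: "nat \<Rightarrow> 'a::real_normed_vector"
  assumes w: "\<And>i. i \<in> I \<Longrightarrow> w i \<ge> 0" and s: "0 \<le> s" "s \<le> 1"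
  shows "cc_pen I w (\<lambda>i. x i + s *\<^sub>R (y i - x i)) \<le> (1 - s) * cc_pen I w x + s * cc_pen I w y"
proof -
  have "w i * w j * norm ((x i + s *\<^sub>R (y i - x i)) - (x j + s *\<^sub>R (y j - x j)))
     \<le> (1 - s) * (w i * w j * norm (x i - x j)) + s * (w i * w j * norm (y i - y j))"
    if "i \<in> I" "j \<in> I" for i j
  proof -
    have eq: "(x i + s *\<^sub>R (y i - x i)) - (x j + s *\<^sub>R (y j - x j)) = (1 - s) *\<^sub>R (x i - x j) + s *\<^sub>R (y i - y j)"
      by (simp add: algebra_simps)
    have "norm ((1 - s) *\<^sub>R (x i - x j) + s *\<^sub>R (y i - y j)) \<le> (1 - s) * norm (x i - x j) + s * norm (y i - y j)"
      using norm_triangle_ineq[of "(1 - s) *\<^sub>R (x i - x j)" "s *\<^sub>R (y i - y j)"] s by simp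
    then have "w i * w j * norm ((1 - s) *\<^sub>R (x i - x j) + s *\<^sub>R (y i - y j))
        \<le> w i * w j * ((1 - s) * norm (x i - x j) + s * norm (y i - y j))"
      using w that by (intro mult_left_mono) auto
    then show ?thesis unfolding eq by (simp add: algebra_simps)
  qed
  then show ?thesis unfolding cc_pen_def
    by (simp add: sum_distrib_left sum.distrib[symmetric] sum_mono)
qed

lemma cc_min_quadratic_growth:
  fixes x y a :: "nat \<Rightarrow> 'a::real_inner"
  assumes I: "finite I" and w: "\<And>i. i \<in> I \<Longrightarrow> w i \<ge> 0" and mu: "mu \<ge> 0"
    and min: "\<And>z. cc_obj I w a mu x \<le> cc_obj I w a mu z"
  shows "cc_obj I w a mu y - cc_obj I w a mu x \<ge> (\<Sum>i\<in>I. w i * (norm (y i - x i))^2) / 2"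
proof -
  define L where "L = (\<Sum>i\<in>I. w i * ((x i - a i) \<bullet> (y i - x i)))"
  define N where "N = (\<Sum>i\<in>I. w i * (norm (y i - x i))^2)"
  have N: "N \<ge> 0" unfolding N_def using w by (intro sum_nonneg) auto
  have "0 \<le> L + mu/2 * (cc_pen I w y - cc_pen I w x) + s * (N/2)" if s: "0 < s" "s \<le> 1" for s
  proof -
    let ?z = "\<lambda>i. x i + s *\<^sub>R (y i - x i)"
    have "cc_obj I w a mu x \<le> cc_obj I w a mu ?z" by (rule min)
    also have "\<dots> = (cc_fit I w a x + 2 * s * L + s^2 * N) / 2 + mu/2 * cc_pen I w ?z"
      by (simp add: cc_obj_eq[OF I] cc_fit_segment L_def N_def)
    also have "\<dots> \<le> (cc_fit I w a x + 2 * s * L + s^2 * N) / 2 + mu/2 * ((1 - s) * cc_pen I w x + s * cc_pen I w y)"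
      using cc_pen_segment_le[OF w, where s=s and x=x and y=y] s mu by (intro add_left_mono mult_left_mono) auto
    finally have "0 \<le> s * (L + mu/2 * (cc_pen I w y - cc_pen I w x) + s * (N/2))"
      by (simp add: cc_obj_eq[OF I] algebra_simps power2_eq_square) argo
    then show ?thesis using s by (simp add: zero_le_mult_iff)
  qed
  then have "0 \<le> L + mu/2 * (cc_pen I w y - cc_pen I w x)"
    using le_of_le_add_mult[of "N/2" 0 "L + mu/2 * (cc_pen I w y - cc_pen I w x)"] N by simp
  moreover have "cc_fit I w a y = cc_fit I w a x + 2 * L + N"
    using cc_fit_segment[where s=1 and x=x and y=y and I=I and w=w and c=a] by (simp add: L_def N_def)
  ultimately show ?thesis by (simp add: cc_obj_eq[OF I] N_def algebra_simps) argo
qed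

lemma cc_min_unique:
  fixes x y a :: "nat \<Rightarrow> 'a::real_inner"
  assumes I: "finite I" and w: "\<And>i. i \<in> I \<Longrightarrow> w i > 0" and mu: "mu \<ge> 0"
    and mx: "\<And>z. cc_obj I w a mu x \<le> cc_obj I w a mu z"
    and my: "\<And>z. cc_obj I w a mu y \<le> cc_obj I w a mu z"
    and i: "i \<in> I"
  shows "x i = y i"
proof -
  have w0: "\<And>i. i \<in> I \<Longrightarrow> w i \<ge> 0" using w by (simp add: less_imp_le)
  have "(\<Sum>i\<in>I. w i * (norm (y i - x i))^2) \<le> 0"
    using cc_min_quadratic_growth[OF I w0 mu mx, of y] my[of x] by simp
  moreover have "(\<Sum>i\<in>I. w i * (norm (y i - x i))^2) \<ge> 0" using w0 by (intro sum_nonneg) auto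
  ultimately have "w i * (norm (y i - x i))^2 = 0"
    using sum_nonneg_eq_0_iff[OF I, of "\<lambda>i. w i * (norm (y i - x i))^2"] w0 i by simp
  then show ?thesis using w[OF i] by simp
qed

lemma compact_PiE_cball:
  fixes c :: "nat \<Rightarrow> 'a::euclidean_space"
  shows "compact (PiE UNIV (\<lambda>i. if i \<in> I then cball (c i) \<rho> else {undefined}))"
proof -
  have "compactin (product_topology (\<lambda>i. euclidean) UNIV)
      (PiE UNIV (\<lambda>i. if i \<in> I then cball (c i) \<rho> else {undefined}))"
    by (simp add: compactin_PiE)
  then show ?thesis unfolding euclidean_product_topology by simp
qed

lemma continuous_on_coordinate [continuous_intros]:
  "continuous_on S (\<lambda>y::nat \<Rightarrow> 'a::topological_space. y i)"
  by (rule continuous_on_subset[OF continuous_on_product_coordinates]) simp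

lemma cc_obj_coercive:
  assumes r: "\<forall>i<n. r i > 0" and mu: "mu \<ge> 0" and P: "P \<ge> 0" and i: "i < n"
    and far: "dist (a i) (y i) > 1 + (\<Sum>i<n. 2 * P / r i)"
  shows "cc_obj {..<n} r a mu y > P"
proof -
  define \<rho> where "\<rho> = 1 + (\<Sum>i<n. 2 * P / r i)"
  have \<rho>: "1 \<le> \<rho>" unfolding \<rho>_def using P r by (auto intro!: sum_nonneg divide_nonneg_pos)
  have "2 * P / r i \<le> (\<Sum>i<n. 2 * P / r i)"
    using i P r by (intro member_le_sum) (auto intro!: divide_nonneg_pos)
  then have "2 * P / r i < \<rho>" unfolding \<rho>_def by simp
  also have "\<rho> \<le> \<rho>^2" using \<rho> by (simp add: power2_eq_square)
  also have "\<rho>^2 < (norm (y i - a i))^2" using far \<rho>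
    by (intro power_strict_mono) (auto simp: \<rho>_def dist_norm norm_minus_commute)
  finally have "2 * P < r i * (norm (y i - a i))^2" using r i
    by (simp add: pos_divide_less_eq mult.commute)
  moreover have "\<And>i. i \<in> {..<n} \<Longrightarrow> r i \<ge> 0" using r by (auto intro: less_imp_le)
  ultimately show ?thesis using cc_obj_ge_coordinate[of "{..<n}" r mu i y a] mu i by simp
qed

lemma cc_min_exists:
  fixes a :: "nat \<Rightarrow> 'a::euclidean_space"
  assumes r: "\<forall>i<n. r i > 0" and mu: "mu \<ge> 0"
  shows "\<exists>x \<in> {..<n} \<rightarrow>\<^sub>E UNIV. \<forall>y. cc_obj {..<n} r a mu x \<le> cc_obj {..<n} r a mu y"
proof -
  define f where "f = cc_obj {..<n} r a mu"
  define P where "P = f (restrict a {..<n})"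
  define \<rho> where "\<rho> = 1 + (\<Sum>i<n. 2 * P / r i)"
  define T where "T = PiE UNIV (\<lambda>i. if i \<in> {..<n} then cball (a i) \<rho> else {undefined})"
  have P: "P \<ge> 0" unfolding P_def f_def using r mu by (intro cc_obj_nonneg) (auto intro: less_imp_le)
  have "0 \<le> (\<Sum>i<n. 2 * P / r i)" using P r by (auto intro!: sum_nonneg divide_nonneg_pos)
  then have "restrict a {..<n} \<in> T" unfolding T_def \<rho>_def by (auto simp: PiE_iff)
  moreover have "continuous_on T f"
    unfolding f_def cc_obj_eq[OF finite_lessThan] cc_fit_def cc_pen_def by (intro continuous_intros) auto
  ultimately obtain x where xT: "x \<in> T" and xmin: "\<And>y. y \<in> T \<Longrightarrow> f x \<le> f y"
    using continuous_attains_inf[OF compact_PiE_cball[of "{..<n}" a \<rho>, folded T_def]] by blast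
  have "f x \<le> f y" for y
  proof (cases "\<forall>i<n. y i \<in> cball (a i) \<rho>")
    case True
    then have "f x \<le> f (restrict y {..<n})" by (intro xmin) (auto simp: T_def PiE_iff)
    also have "f (restrict y {..<n}) = f y" unfolding f_def by (rule cc_obj_cong) auto
    finally show ?thesis .
  next
    case False
    then have "f y > P" unfolding f_def \<rho>_def using cc_obj_coercive[OF r mu P] by (auto simp: not_le)
    moreover have "f x \<le> P" unfolding P_def using \<open>restrict a {..<n} \<in> T\<close> by (rule xmin)
    ultimately show ?thesis by linarith
  qed
  moreover have "x \<in> {..<n} \<rightarrow>\<^sub>E UNIV"
    using xT unfolding T_def by (auto simp: PiE_iff extensional_def) (metis singletonD)
  ultimately show ?thesis unfolding f_def by blast
qed

lemma cc_sol_min: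
  fixes a :: "nat \<Rightarrow> 'a::euclidean_space"
  assumes r: "\<forall>i<n. r i > 0" and mu: "mu \<ge> 0"
  shows "cc_obj {..<n} r a mu (cc_sol n r a mu) \<le> cc_obj {..<n} r a mu y"
proof -
  have ex1: "\<exists>!x. x \<in> {..<n} \<rightarrow>\<^sub>E UNIV \<and> (\<forall>y. cc_obj {..<n} r a mu x \<le> cc_obj {..<n} r a mu y)"
  proof (rule ex_ex1I)
    show "\<exists>x. x \<in> {..<n} \<rightarrow>\<^sub>E UNIV \<and> (\<forall>y. cc_obj {..<n} r a mu x \<le> cc_obj {..<n} r a mu y)"
      using cc_min_exists[OF r mu] by blast
  next
    fix x y
    assume "x \<in> {..<n} \<rightarrow>\<^sub>E UNIV \<and> (\<forall>y. cc_obj {..<n} r a mu x \<le> cc_obj {..<n} r a mu y)"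
      and "y \<in> {..<n} \<rightarrow>\<^sub>E UNIV \<and> (\<forall>z. cc_obj {..<n} r a mu y \<le> cc_obj {..<n} r a mu z)"
    then have x: "x \<in> {..<n} \<rightarrow>\<^sub>E UNIV" "\<And>z. cc_obj {..<n} r a mu x \<le> cc_obj {..<n} r a mu z"
      and y: "y \<in> {..<n} \<rightarrow>\<^sub>E UNIV" "\<And>z. cc_obj {..<n} r a mu y \<le> cc_obj {..<n} r a mu z"
      by blast+
    have "x i = y i" if "i < n" for i
      using cc_min_unique[OF finite_lessThan _ mu x(2) y(2)] r that by simp
    then show "x = y" using x(1) y(1) by (intro extensionalityI[of _ "{..<n}"]) (auto simp: PiE_iff)
  qed
  show ?thesis unfolding cc_sol_def using theI'[OF ex1] by blast
qed

lemma cc_min_dist_le: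
  fixes x y a :: "nat \<Rightarrow> 'a::real_inner"
  assumes I: "finite I" and w: "\<And>i. i \<in> I \<Longrightarrow> w i \<ge> 0" and mu: "0 \<le> mu" "mu \<le> nu"
    and mx: "\<And>z. cc_obj I w a mu x \<le> cc_obj I w a mu z"
    and my: "\<And>z. cc_obj I w a nu y \<le> cc_obj I w a nu z"
  shows "(\<Sum>i\<in>I. w i * (norm (y i - x i))^2) \<le> (nu - mu) * cc_pen I w x"
proof -
  have "cc_obj I w a mu y - cc_obj I w a mu x \<ge> (\<Sum>i\<in>I. w i * (norm (y i - x i))^2) / 2"
    by (rule cc_min_quadratic_growth[OF I w mu(1) mx])
  moreover have "cc_obj I w a nu x - cc_obj I w a nu y \<ge> (\<Sum>i\<in>I. w i * (norm (y i - x i))^2) / 2"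
    using cc_min_quadratic_growth[OF I w _ my, of x] mu by (simp add: norm_minus_commute)
  moreover have "(nu - mu) * cc_pen I w y \<ge> 0" using cc_pen_nonneg[of I w y, OF w] mu by simp
  moreover have "(\<Sum>i\<in>I. w i * (norm (y i - x i))^2) \<ge> 0" using w by (intro sum_nonneg) auto
  ultimately show ?thesis unfolding cc_obj_eq[OF I] by (simp add: algebra_simps)
qed

lemma norm_add_le_first_order:
  fixes v h :: "'a::real_inner"
  assumes v: "v \<noteq> 0"
  shows "norm (v + h) \<le> norm v + (h \<bullet> v) / norm v + (norm h)^2 / (2 * norm v)"
proof -
  define N where "N = norm v"
  define t where "t = (h \<bullet> v) / N + (norm h)^2 / (2 * N)"
  have N: "N > 0" using v by (simp add: N_def)
  have "(h \<bullet> v) / N \<ge> - norm h"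
    using Cauchy_Schwarz_ineq2[of h v] N unfolding N_def by (simp add: le_divide_eq)
  then have "N + t \<ge> N - norm h + (norm h)^2 / (2 * N)" unfolding t_def by linarith
  also have "N - norm h + (norm h)^2 / (2 * N) = ((N - norm h)^2 + N^2) / (2 * N)"
    using N by (simp add: field_simps power2_eq_square)
  also have "\<dots> \<ge> 0" using N by (intro divide_nonneg_pos) auto
  finally have "N + t \<ge> 0" .
  moreover have "(norm (v + h))^2 \<le> (N + t)^2"
  proof -
    have "(norm (v + h))^2 = N^2 + 2 * (h \<bullet> v) + (norm h)^2"
      unfolding N_def power2_norm_eq_inner by (simp add: inner_add_left inner_add_right inner_commute)
    also have "\<dots> = N^2 + 2 * N * t" using N unfolding t_def by (simp add: field_simps power2_eq_square)
    also have "\<dots> \<le> (N + t)^2" by (simp add: power2_eq_square algebra_simps)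
    finally show ?thesis .
  qed
  ultimately have "norm (v + h) \<le> N + t" by (rule power2_le_imp_le[rotated])
  then show ?thesis unfolding t_def N_def by (simp add: add.assoc)
qed

lemma sum_norm_add_balanced_le:
  fixes v :: "'a::real_inner" and d :: "nat \<Rightarrow> 'a"
  assumes B: "finite B" and v: "v \<noteq> 0" and w: "\<And>i. i \<in> B \<Longrightarrow> w i \<ge> 0"
    and d: "(\<Sum>i\<in>B. w i *\<^sub>R d i) = 0" and s: "s \<ge> 0"
  shows "(\<Sum>i\<in>B. w i * norm (v + s *\<^sub>R d i)) \<le> (\<Sum>i\<in>B. w i) * norm v
           + s^2 * (\<Sum>i\<in>B. w i * (norm (d i))^2) / (2 * norm v)"
proof -
  have "(\<Sum>i\<in>B. w i * norm (v + s *\<^sub>R d i)) \<le>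
     (\<Sum>i\<in>B. w i * (norm v + ((s *\<^sub>R d i) \<bullet> v) / norm v + (norm (s *\<^sub>R d i))^2 / (2 * norm v)))"
    by (intro sum_mono mult_left_mono norm_add_le_first_order[OF v]) (auto intro: w)
  also have "\<dots> = (\<Sum>i\<in>B. w i) * norm v + (s / norm v) * ((\<Sum>i\<in>B. w i *\<^sub>R d i) \<bullet> v)
      + s^2 * (\<Sum>i\<in>B. w i * (norm (d i))^2) / (2 * norm v)"
    using s by (simp add: sum.distrib sum_distrib_left sum_distrib_right sum_divide_distrib inner_sum_left
        algebra_simps power2_eq_square)
  also have "\<dots> = (\<Sum>i\<in>B. w i) * norm v + s^2 * (\<Sum>i\<in>B. w i * (norm (d i))^2) / (2 * norm v)"
    using d by simp
  finally show ?thesis .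
qed

lemma sum_norm_weighted_mean_le:
  fixes m u :: "'a::real_normed_vector"
  assumes w: "\<And>i. i \<in> B \<Longrightarrow> w i \<ge> 0"
    and m: "(\<Sum>i\<in>B. w i) *\<^sub>R m = (\<Sum>i\<in>B. w i *\<^sub>R y i)"
  shows "(\<Sum>i\<in>B. w i * norm (m - u)) \<le> (\<Sum>i\<in>B. w i * norm (y i - u))"
proof -
  have "(\<Sum>i\<in>B. w i * norm (m - u)) = norm ((\<Sum>i\<in>B. w i) *\<^sub>R (m - u))"
    using w by (simp add: sum_distrib_right sum_nonneg)
  also have "(\<Sum>i\<in>B. w i) *\<^sub>R (m - u) = (\<Sum>i\<in>B. w i *\<^sub>R (y i - u))"
    using m by (simp add: scaleR_diff_right scaleR_sum_left sum_subtractf)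
  also have "norm \<dots> \<le> (\<Sum>i\<in>B. norm (w i *\<^sub>R (y i - u)))" by (rule norm_sum)
  also have "\<dots> = (\<Sum>i\<in>B. w i * norm (y i - u))" using w by (intro sum.cong) auto
  finally show ?thesis .
qed

lemma cc_pen_block_split:
  fixes u :: "nat \<Rightarrow> 'a::real_normed_vector"
  assumes I: "finite I" and B: "B \<subseteq> I"
  shows "cc_pen I w u = (\<Sum>i\<in>B. \<Sum>j\<in>B. w i * w j * norm (u i - u j))
     + 2 * (\<Sum>j\<in>I-B. w j * (\<Sum>i\<in>B. w i * norm (u i - u j)))
     + (\<Sum>i\<in>I-B. \<Sum>j\<in>I-B. w i * w j * norm (u i - u j))"
proof -
  have split: "(\<Sum>i\<in>I. f i) = (\<Sum>i\<in>B. f i) + (\<Sum>i\<in>I-B. f i)" for f :: "nat \<Rightarrow> real"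
    using sum.subset_diff[OF B I] by (simp add: add.commute)
  have "(\<Sum>i\<in>B. \<Sum>j\<in>I-B. w i * w j * norm (u i - u j)) = (\<Sum>j\<in>I-B. w j * (\<Sum>i\<in>B. w i * norm (u i - u j)))"
    by (subst sum.swap) (simp add: sum_distrib_left mult_ac)
  moreover have "(\<Sum>i\<in>I-B. \<Sum>j\<in>B. w i * w j * norm (u i - u j)) = (\<Sum>j\<in>I-B. w j * (\<Sum>i\<in>B. w i * norm (u i - u j)))"
    by (simp add: sum_distrib_left mult_ac norm_minus_commute)
  ultimately show ?thesis unfolding cc_pen_def split by (simp add: sum.distrib)
qed

lemma cc_fit_block_shift:
  fixes x a d :: "nat \<Rightarrow> 'a::real_inner"
  assumes I: "finite I" and B: "B \<subseteq> I" and xB: "\<And>k. k \<in> B \<Longrightarrow> x k = u"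
    and d: "(\<Sum>k\<in>B. w k *\<^sub>R d k) = 0"
  shows "cc_fit I w a (\<lambda>k. if k \<in> B then x k + s *\<^sub>R d k else x k)
    = cc_fit I w a x - 2 * s * (\<Sum>k\<in>B. w k * (d k \<bullet> a k)) + s^2 * (\<Sum>k\<in>B. w k * (norm (d k))^2)"
proof -
  define y where "y k = (if k \<in> B then x k + d k else x k)" for k
  have restrict: "(\<Sum>k\<in>I. if k \<in> B then f k else 0) = (\<Sum>k\<in>B. f k)" for f :: "nat \<Rightarrow> real"
    using sum.inter_restrict[OF I, of f B] B by (simp add: Int_absorb1)
  have "(\<Sum>k\<in>I. w k * ((x k - a k) \<bullet> (y k - x k))) = (\<Sum>k\<in>B. w k * ((u - a k) \<bullet> d k))"
    unfolding restrict[symmetric] by (intro sum.cong) (auto simp: y_def xB)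
  also have "\<dots> = u \<bullet> (\<Sum>k\<in>B. w k *\<^sub>R d k) - (\<Sum>k\<in>B. w k * (d k \<bullet> a k))"
    by (simp add: inner_diff_left inner_sum_right algebra_simps sum_subtractf inner_commute)
  finally have cross: "(\<Sum>k\<in>I. w k * ((x k - a k) \<bullet> (y k - x k))) = - (\<Sum>k\<in>B. w k * (d k \<bullet> a k))"
    using d by simp
  have square: "(\<Sum>k\<in>I. w k * (norm (y k - x k))^2) = (\<Sum>k\<in>B. w k * (norm (d k))^2)"
    unfolding restrict[symmetric] by (intro sum.cong) (auto simp: y_def)
  have "(\<lambda>k. if k \<in> B then x k + s *\<^sub>R d k else x k) = (\<lambda>k. x k + s *\<^sub>R (y k - x k))"
    by (auto simp: y_def)
  then show ?thesis using cc_fit_segment[of I w a x s y] cross square by simp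
qed

lemma cc_pen_block_perturb_le:
  fixes x d :: "nat \<Rightarrow> 'a::real_inner"
  assumes I: "finite I" and w: "\<And>i. i \<in> I \<Longrightarrow> w i \<ge> 0" and B: "B \<subseteq> I"
    and xB: "\<And>k. k \<in> B \<Longrightarrow> x k = z" and xnB: "\<And>k. k \<in> I - B \<Longrightarrow> x k \<noteq> z"
    and d: "(\<Sum>k\<in>B. w k *\<^sub>R d k) = 0" and s: "0 \<le> s"
  shows "cc_pen I w (\<lambda>k. if k \<in> B then x k + s *\<^sub>R d k else x k)
    \<le> cc_pen I w x + s * (\<Sum>i\<in>B. \<Sum>j\<in>B. w i * w j * norm (d i - d j))
      + s^2 * (\<Sum>j\<in>I-B. w j * (\<Sum>k\<in>B. w k * (norm (d k))^2) / norm (z - x j))"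
proof -
  define x' where "x' k = (if k \<in> B then x k + s *\<^sub>R d k else x k)" for k
  define N where "N = (\<Sum>k\<in>B. w k * (norm (d k))^2)"
  have fB: "finite B" using I B by (rule finite_subset[rotated])
  have wB: "\<And>i. i \<in> B \<Longrightarrow> w i \<ge> 0" using w B by auto
  have inside: "(\<Sum>i\<in>B. \<Sum>j\<in>B. w i * w j * norm (x' i - x' j))
      = s * (\<Sum>i\<in>B. \<Sum>j\<in>B. w i * w j * norm (d i - d j))"
    unfolding sum_distrib_left using s
    by (intro sum.cong refl) (simp add: x'_def xB flip: scaleR_diff_right)
  have "(\<Sum>i\<in>B. w i * norm (x' i - x' j)) \<le> (\<Sum>i\<in>B. w i * norm (x i - x j)) + s^2 * N / (2 * norm (z - x j))"
    if j: "j \<in> I - B" for j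
  proof -
    have "(\<Sum>i\<in>B. w i * norm (x' i - x' j)) = (\<Sum>i\<in>B. w i * norm ((z - x j) + s *\<^sub>R d i))"
      using j xB by (intro sum.cong refl) (simp add: x'_def algebra_simps)
    also have "\<dots> \<le> (\<Sum>i\<in>B. w i) * norm (z - x j) + s^2 * N / (2 * norm (z - x j))"
      unfolding N_def using sum_norm_add_balanced_le[OF fB _ wB d s] xnB[OF j] by simp
    also have "(\<Sum>i\<in>B. w i) * norm (z - x j) = (\<Sum>i\<in>B. w i * norm (x i - x j))"
      using xB by (simp add: sum_distrib_right)
    finally show ?thesis .
  qed
  then have "(\<Sum>j\<in>I-B. w j * (\<Sum>i\<in>B. w i * norm (x' i - x' j)))
      \<le> (\<Sum>j\<in>I-B. w j * ((\<Sum>i\<in>B. w i * norm (x i - x j)) + s^2 * N / (2 * norm (z - x j))))"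
    using w by (intro sum_mono mult_left_mono) auto
  also have "\<dots> = (\<Sum>j\<in>I-B. w j * (\<Sum>i\<in>B. w i * norm (x i - x j)))
      + s^2 * (\<Sum>j\<in>I-B. w j * N / norm (z - x j)) / 2"
    by (simp add: algebra_simps sum.distrib sum_distrib_left sum_divide_distrib)
  finally have across: "(\<Sum>j\<in>I-B. w j * (\<Sum>i\<in>B. w i * norm (x' i - x' j)))
      \<le> (\<Sum>j\<in>I-B. w j * (\<Sum>i\<in>B. w i * norm (x i - x j))) + s^2 * (\<Sum>j\<in>I-B. w j * N / norm (z - x j)) / 2" .
  have "(\<Sum>i\<in>I-B. \<Sum>j\<in>I-B. w i * w j * norm (x' i - x' j)) = (\<Sum>i\<in>I-B. \<Sum>j\<in>I-B. w i * w j * norm (x i - x j))"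
    by (intro sum.cong refl) (simp add: x'_def)
  moreover have "(\<Sum>i\<in>B. \<Sum>j\<in>B. w i * w j * norm (x i - x j)) = 0" using xB by simp
  ultimately show ?thesis
    using across unfolding x'_def[symmetric] N_def[symmetric]
      cc_pen_block_split[OF I B, of w x'] cc_pen_block_split[OF I B, of w x] inside
    by simp
qed

lemma cc_min_block_first_order:
  fixes x a d :: "nat \<Rightarrow> 'a::real_inner"
  assumes I: "finite I" and w: "\<And>i. i \<in> I \<Longrightarrow> w i \<ge> 0" and mu: "0 \<le> mu"
    and min: "\<And>y. cc_obj I w a mu x \<le> cc_obj I w a mu y"
    and B: "B \<subseteq> I" and xB: "\<And>k. k \<in> B \<Longrightarrow> x k = z" and xnB: "\<And>k. k \<in> I - B \<Longrightarrow> x k \<noteq> z"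
    and d: "(\<Sum>k\<in>B. w k *\<^sub>R d k) = 0"
  shows "(\<Sum>k\<in>B. w k * (d k \<bullet> a k)) \<le> mu / 2 * (\<Sum>i\<in>B. \<Sum>j\<in>B. w i * w j * norm (d i - d j))"
proof -
  define A where "A = (\<Sum>k\<in>B. w k * (d k \<bullet> a k))"
  define W where "W = (\<Sum>i\<in>B. \<Sum>j\<in>B. w i * w j * norm (d i - d j))"
  define N where "N = (\<Sum>k\<in>B. w k * (norm (d k))^2)"
  define M where "M = (\<Sum>j\<in>I-B. w j * N / norm (z - x j))"
  have N: "N \<ge> 0" unfolding N_def using w B by (intro sum_nonneg) auto
  have M: "M \<ge> 0" unfolding M_def using w N by (intro sum_nonneg) auto
  have step: "A \<le> mu / 2 * W + s * (N / 2 + mu / 2 * M)" if s: "0 < s" "s \<le> 1" for s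
  proof -
    let ?x' = "\<lambda>k. if k \<in> B then x k + s *\<^sub>R d k else x k"
    have fit: "cc_fit I w a ?x' = cc_fit I w a x - 2 * s * A + s^2 * N"
      unfolding A_def N_def by (rule cc_fit_block_shift[OF I B xB d])
    have pen: "cc_pen I w ?x' \<le> cc_pen I w x + s * W + s^2 * M"
      unfolding W_def M_def N_def by (rule cc_pen_block_perturb_le[OF I w B xB xnB d less_imp_le[OF s(1)]])
    have "cc_obj I w a mu x \<le> cc_obj I w a mu ?x'" by (rule min)
    also have "\<dots> \<le> (cc_fit I w a x - 2 * s * A + s^2 * N) / 2 + mu / 2 * (cc_pen I w x + s * W + s^2 * M)"
      unfolding cc_obj_eq[OF I] fit using pen mu by (intro add_left_mono mult_left_mono) auto
    finally have "s * A \<le> s * (mu / 2 * W + s * (N / 2 + mu / 2 * M))"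
      unfolding cc_obj_eq[OF I] by (simp add: field_simps power2_eq_square)
    then show ?thesis using s by simp
  qed
  show ?thesis unfolding A_def[symmetric] W_def[symmetric]
    by (rule le_of_le_add_mult[OF _ step]) (use N M mu in auto)
qed

lemma cc_pen_block_mean_le:
  fixes y :: "nat \<Rightarrow> 'a::real_normed_vector"
  assumes I: "finite I" and w: "\<And>i. i \<in> I \<Longrightarrow> w i \<ge> 0" and B: "B \<subseteq> I"
    and m: "(\<Sum>i\<in>B. w i) *\<^sub>R m = (\<Sum>i\<in>B. w i *\<^sub>R y i)"
  shows "cc_pen I w (\<lambda>k. if k \<in> B then m else y k) + (\<Sum>i\<in>B. \<Sum>j\<in>B. w i * w j * norm (y i - y j))
    \<le> cc_pen I w y"
proof -
  define y' where "y' k = (if k \<in> B then m else y k)" for k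
  have inner: "(\<Sum>i\<in>B. w i * norm (y' i - y' j)) \<le> (\<Sum>i\<in>B. w i * norm (y i - y j))"
    if "j \<in> I - B" for j
    using sum_norm_weighted_mean_le[of B w m y "y j"] w B m that by (auto simp: y'_def)
  have "(\<Sum>j\<in>I-B. w j * (\<Sum>i\<in>B. w i * norm (y' i - y' j))) \<le> (\<Sum>j\<in>I-B. w j * (\<Sum>i\<in>B. w i * norm (y i - y j)))"
    by (rule sum_mono, rule mult_left_mono[OF inner]) (use w in auto)
  moreover have "(\<Sum>i\<in>I-B. \<Sum>j\<in>I-B. w i * w j * norm (y' i - y' j)) = (\<Sum>i\<in>I-B. \<Sum>j\<in>I-B. w i * w j * norm (y i - y j))"
    by (intro sum.cong refl) (simp add: y'_def)
  moreover have "(\<Sum>i\<in>B. \<Sum>j\<in>B. w i * w j * norm (y' i - y' j)) = 0" by (simp add: y'_def)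
  ultimately show ?thesis unfolding y'_def[symmetric] cc_pen_block_split[OF I B, of w y'] cc_pen_block_split[OF I B, of w y]
    by simp
qed

lemma sum_scaleR_deviation_mean:
  fixes y :: "nat \<Rightarrow> 'a::real_vector"
  assumes "(\<Sum>k\<in>B. w k) *\<^sub>R m = (\<Sum>k\<in>B. w k *\<^sub>R y k)"
  shows "(\<Sum>k\<in>B. w k *\<^sub>R (y k - m)) = 0"
  using assms by (simp add: scaleR_diff_right sum_subtractf scaleR_sum_left[symmetric])

lemma cc_min_block_deviation_le:
  fixes y a :: "nat \<Rightarrow> 'a::real_inner"
  assumes I: "finite I" and w: "\<And>i. i \<in> I \<Longrightarrow> w i \<ge> 0" and nu: "0 \<le> nu"
    and min: "\<And>z. cc_obj I w a nu y \<le> cc_obj I w a nu z"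
    and B: "B \<subseteq> I" and m: "(\<Sum>k\<in>B. w k) *\<^sub>R m = (\<Sum>k\<in>B. w k *\<^sub>R y k)"
  shows "(\<Sum>k\<in>B. w k * (norm (y k - m))^2)
    \<le> 2 * (\<Sum>k\<in>B. w k * ((y k - m) \<bullet> a k)) - nu * (\<Sum>i\<in>B. \<Sum>j\<in>B. w i * w j * norm (y i - y j))"
proof -
  define d where "d k = y k - m" for k
  define y' where "y' = (\<lambda>k. if k \<in> B then m else y k)"
  have d: "(\<Sum>k\<in>B. w k *\<^sub>R d k) = 0" unfolding d_def using m by (rule sum_scaleR_deviation_mean)
  have "(\<lambda>k. if k \<in> B then y' k + 1 *\<^sub>R d k else y' k) = y" by (auto simp: y'_def d_def)
  moreover have "cc_fit I w a (\<lambda>k. if k \<in> B then y' k + 1 *\<^sub>R d k else y' k)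
      = cc_fit I w a y' - 2 * 1 * (\<Sum>k\<in>B. w k * (d k \<bullet> a k)) + 1^2 * (\<Sum>k\<in>B. w k * (norm (d k))^2)"
    by (rule cc_fit_block_shift[OF I B _ d]) (simp add: y'_def)
  ultimately have fit: "cc_fit I w a y
      = cc_fit I w a y' - 2 * (\<Sum>k\<in>B. w k * (d k \<bullet> a k)) + (\<Sum>k\<in>B. w k * (norm (d k))^2)"
    by simp
  have "cc_pen I w y' + (\<Sum>i\<in>B. \<Sum>j\<in>B. w i * w j * norm (y i - y j)) \<le> cc_pen I w y"
    unfolding y'_def by (rule cc_pen_block_mean_le[OF I w B m])
  then have "nu * (cc_pen I w y' + (\<Sum>i\<in>B. \<Sum>j\<in>B. w i * w j * norm (y i - y j))) \<le> nu * cc_pen I w y"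
    by (rule mult_left_mono) (use nu in auto)
  then show ?thesis using fit min[of y'] unfolding cc_obj_eq[OF I] d_def distrib_left by linarith
qed

lemma cc_min_fusion_persists:
  fixes x y a :: "nat \<Rightarrow> 'a::real_inner"
  assumes I: "finite I" and w: "\<And>i. i \<in> I \<Longrightarrow> w i > 0" and mu: "0 \<le> mu" "mu \<le> nu"
    and mx: "\<And>z. cc_obj I w a mu x \<le> cc_obj I w a mu z"
    and my: "\<And>z. cc_obj I w a nu y \<le> cc_obj I w a nu z"
    and i: "i \<in> I" and j: "j \<in> I" and xij: "x i = x j"
  shows "y i = y j"
proof -
  define B where "B = {k\<in>I. x k = x i}"
  have B: "B \<subseteq> I" "i \<in> B" "j \<in> B" "finite B" using I i j xij by (auto simp: B_def)
  have w0: "\<And>k. k \<in> I \<Longrightarrow> w k \<ge> 0" using w by (simp add: less_imp_le)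
  have "(\<Sum>k\<in>B. w k) > 0" using B w by (intro sum_pos2[of _ i]) (use w0 in auto)
  then obtain m where m: "(\<Sum>k\<in>B. w k) *\<^sub>R m = (\<Sum>k\<in>B. w k *\<^sub>R y k)"
    by (intro that[of "(1 / (\<Sum>k\<in>B. w k)) *\<^sub>R (\<Sum>k\<in>B. w k *\<^sub>R y k)"]) simp
  define W where "W = (\<Sum>i\<in>B. \<Sum>j\<in>B. w i * w j * norm (y i - y j))"
  have "(\<Sum>k\<in>B. w k * ((y k - m) \<bullet> a k)) \<le> mu / 2 * W"
    unfolding W_def using cc_min_block_first_order[OF I w0 mu(1) mx B(1) _ _ sum_scaleR_deviation_mean[OF m]]
    by (auto simp: B_def)
  moreover have "mu * W \<le> nu * W"
    unfolding W_def using w0 B(1) mu by (intro mult_right_mono sum_nonneg) (auto simp: subset_iff)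
  ultimately have "(\<Sum>k\<in>B. w k * (norm (y k - m))^2) \<le> 0"
    using cc_min_block_deviation_le[OF I w0 _ my B(1) m] mu unfolding W_def by linarith
  moreover have nonneg: "\<And>k. k \<in> B \<Longrightarrow> w k * (norm (y k - m))^2 \<ge> 0" using w0 B by auto
  moreover have "(\<Sum>k\<in>B. w k * (norm (y k - m))^2) \<ge> 0" using nonneg by (rule sum_nonneg)
  ultimately have "(\<Sum>k\<in>B. w k * (norm (y k - m))^2) = 0" by linarith
  then have zero: "w k * (norm (y k - m))^2 = 0" if "k \<in> B" for k
    using sum_nonneg_eq_0_iff[OF B(4), of "\<lambda>k. w k * (norm (y k - m))^2"] nonneg that by simp
  have "y k = m" if "k \<in> B" for k using zero[OF that] w[of k] B(1) that by auto
  then show ?thesis using B(2,3) by simp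
qed

lemma clusters_indexing:
  assumes "bij_betw C {..<K} (clusters n x)"
  obtains cl where "\<And>i. i < n \<Longrightarrow> cl i < K"
    and "\<And>k. k < K \<Longrightarrow> C k = {i. i < n \<and> cl i = k}"
    and "\<And>k. k < K \<Longrightarrow> C k \<noteq> {}"
    and "\<And>i j. i < n \<Longrightarrow> j < n \<Longrightarrow> cl i = cl j \<longleftrightarrow> x i = x j"
proof -
  define R where "R = {(i,j). i < n \<and> j < n \<and> x i = x j}"
  have R: "equiv {..<n} R" unfolding equiv_def refl_on_def sym_def trans_def R_def by auto
  have bij: "bij_betw C {..<K} ({..<n} // R)" using assms unfolding clusters_def R_def .
  define cl where "cl i = inv_into {..<K} C (R``{i})" for i
  have Ri: "R``{i} \<in> {..<n} // R" if "i < n" for i using that by (auto intro: quotientI)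
  have cl: "cl i < K" "C (cl i) = R``{i}" if "i < n" for i
    using bij_betw_apply[OF bij_betw_inv_into[OF bij] Ri[OF that]]
      bij_betw_inv_into_right[OF bij Ri[OF that]] unfolding cl_def by auto
  have Ck: "C k \<in> {..<n} // R" if "k < K" for k using bij_betw_apply[OF bij] that by simp
  have "C k = {i. i < n \<and> cl i = k}" if k: "k < K" for k
  proof (intro set_eqI iffI)
    fix i assume i: "i \<in> C k"
    from Ck[OF k] obtain j where j: "j < n" "C k = R``{j}" by (auto elim: quotientE)
    with i have "(j, i) \<in> R" by simp
    then have "C k = R``{i}" "i < n" using j equiv_class_eq[OF R] by (auto simp: R_def)
    moreover have "inv_into {..<K} C (C k) = k" using bij_betw_inv_into_left[OF bij] k by simp
    ultimately show "i \<in> {i. i < n \<and> cl i = k}" unfolding cl_def by simp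
  next
    fix i assume "i \<in> {i. i < n \<and> cl i = k}"
    then show "i \<in> C k" using cl equiv_class_self[OF R] by auto
  qed
  moreover have "C k \<noteq> {}" if "k < K" for k using in_quotient_imp_non_empty[OF R Ck[OF that]] .
  moreover have "cl i = cl j \<longleftrightarrow> x i = x j" if "i < n" "j < n" for i j
  proof
    assume "cl i = cl j"
    then have "R``{i} = R``{j}" using cl that by metis
    then show "x i = x j" using eq_equiv_class_iff[OF R] that by (auto simp: R_def)
  next
    assume "x i = x j"
    then have "R``{i} = R``{j}" using equiv_class_eq[OF R] that by (auto simp: R_def)
    then show "cl i = cl j" by (simp add: cl_def)
  qed
  ultimately show ?thesis using that cl by blast
qed

lemma sum_group_by_index:
  fixes n K :: nat
  assumes cl: "\<And>i. i < n \<Longrightarrow> cl i < K" and C: "\<And>k. k < K \<Longrightarrow> C k = {i. i < n \<and> cl i = k}"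
  shows "(\<Sum>i<n. f i (cl i)) = (\<Sum>k<K. \<Sum>i\<in>C k. f i k)"
proof -
  have "(\<Sum>i<n. f i (cl i)) = (\<Sum>k<K. \<Sum>i\<in>{i \<in> {..<n}. cl i = k}. f i (cl i))"
    using cl by (intro sum.group[symmetric]) auto
  also have "\<dots> = (\<Sum>k<K. \<Sum>i\<in>C k. f i k)"
    using C by (intro sum.cong refl) auto
  finally show ?thesis .
qed

lemma sum_weighted_sq_dist_eq:
  fixes z c :: "'a::real_inner"
  assumes c: "(\<Sum>i\<in>C. r i) *\<^sub>R c = (\<Sum>i\<in>C. r i *\<^sub>R a i)"
  shows "(\<Sum>i\<in>C. r i * (norm (z - a i))^2)
     = (\<Sum>i\<in>C. r i) * (norm (z - c))^2 + ((\<Sum>i\<in>C. r i * (norm (a i))^2) - (\<Sum>i\<in>C. r i) * (norm c)^2)"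
proof -
  define W where "W = (\<Sum>i\<in>C. r i)"
  have sq: "(norm (z - u))^2 = (norm z)^2 - 2 * (z \<bullet> u) + (norm u)^2" for u
    unfolding power2_norm_eq_inner by (simp add: inner_diff_left inner_diff_right inner_commute)
  have "(\<Sum>i\<in>C. r i * (z \<bullet> a i)) = z \<bullet> (\<Sum>i\<in>C. r i *\<^sub>R a i)" by (simp add: inner_sum_right)
  also have "\<dots> = W * (z \<bullet> c)" unfolding c[symmetric] W_def by simp
  finally have cross: "(\<Sum>i\<in>C. r i * (z \<bullet> a i)) = W * (z \<bullet> c)" .
  have "(\<Sum>i\<in>C. r i * (norm (z - a i))^2)
      = W * (norm z)^2 - 2 * (\<Sum>i\<in>C. r i * (z \<bullet> a i)) + (\<Sum>i\<in>C. r i * (norm (a i))^2)"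
    unfolding sq W_def
    by (simp add: algebra_simps sum.distrib sum_subtractf sum_distrib_left sum_distrib_right)
  then show ?thesis unfolding cross W_def[symmetric] sq by (simp add: algebra_simps)
qed

lemma cc_obj_lift:
  fixes n K :: nat and a h :: "nat \<Rightarrow> 'a::real_inner"
  assumes cl: "\<And>i. i < n \<Longrightarrow> cl i < K" and C: "\<And>k. k < K \<Longrightarrow> C k = {i. i < n \<and> cl i = k}"
    and ne: "\<And>k. k < K \<Longrightarrow> C k \<noteq> {}" and r: "\<And>i. i < n \<Longrightarrow> r i > 0"
  shows "cc_obj {..<n} r a lam (\<lambda>i. h (cl i)) = cc_obj {..<K} (red_w r C) (red_a r a C) lam h
     + (\<Sum>k<K. (\<Sum>i\<in>C k. r i * (norm (a i))^2) - red_w r C k * (norm (red_a r a C k))^2) / 2"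
proof -
  note group = sum_group_by_index[OF cl C]
  have pos: "red_w r C k > 0" if "k < K" for k
    unfolding red_w_def using ne[OF that] r C[OF that] by (intro sum_pos) auto
  have mean: "red_w r C k *\<^sub>R red_a r a C k = (\<Sum>i\<in>C k. r i *\<^sub>R a i)" if "k < K" for k
    using pos[OF that] by (simp add: red_a_def)
  have "cc_fit {..<n} r a (\<lambda>i. h (cl i)) = (\<Sum>k<K. \<Sum>i\<in>C k. r i * (norm (h k - a i))^2)"
    unfolding cc_fit_def by (rule group)
  also have "\<dots> = cc_fit {..<K} (red_w r C) (red_a r a C) h
      + (\<Sum>k<K. (\<Sum>i\<in>C k. r i * (norm (a i))^2) - red_w r C k * (norm (red_a r a C k))^2)"
    unfolding cc_fit_def sum.distrib[symmetric]
    by (intro sum.cong refl) (use mean in \<open>simp add: sum_weighted_sq_dist_eq red_w_def\<close>)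
  finally have fit: "cc_fit {..<n} r a (\<lambda>i. h (cl i)) = \<dots>" .
  have "(\<Sum>j<n. r i * r j * norm (h (cl i) - h (cl j))) = (\<Sum>k'<K. r i * red_w r C k' * norm (h (cl i) - h k'))"
    for i using group[of "\<lambda>j k'. r i * r j * norm (h (cl i) - h k')"]
    by (simp add: red_w_def sum_distrib_left sum_distrib_right mult_ac)
  then have "cc_pen {..<n} r (\<lambda>i. h (cl i)) = (\<Sum>i<n. \<Sum>k'<K. r i * red_w r C k' * norm (h (cl i) - h k'))"
    unfolding cc_pen_def by simp
  also have "\<dots> = (\<Sum>k<K. \<Sum>i\<in>C k. \<Sum>k'<K. r i * red_w r C k' * norm (h k - h k'))"
    by (rule group)
  also have "\<dots> = cc_pen {..<K} (red_w r C) h"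
    unfolding cc_pen_def
    by (rule sum.cong[OF refl], subst sum.swap) (simp add: red_w_def sum_distrib_right mult.assoc)
  finally show ?thesis unfolding cc_obj_eq[OF finite_lessThan] fit by (simp add: add_divide_distrib)
qed

lemma cc_sol_fusion_persists:
  fixes a :: "nat \<Rightarrow> 'a::euclidean_space"
  assumes r: "\<forall>i<n. r i > 0" and mu: "0 \<le> mu" "mu \<le> nu" and i: "i < n" and j: "j < n"
    and fused: "cc_sol n r a mu i = cc_sol n r a mu j"
  shows "cc_sol n r a nu i = cc_sol n r a nu j"
proof -
  have nu: "0 \<le> nu" using mu by linarith
  show ?thesis
    using cc_min_fusion_persists[OF finite_lessThan _ mu cc_sol_min[OF r mu(1)] cc_sol_min[OF r nu]]
      r i j fused by auto
qed

lemma cc_sol_coord_dist_le: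
  fixes a :: "nat \<Rightarrow> 'a::euclidean_space"
  assumes r: "\<forall>i<n. r i > 0" and mu: "0 \<le> mu" "mu \<le> nu" and i: "i < n"
  shows "r i * (norm (cc_sol n r a nu i - cc_sol n r a mu i))^2 \<le> (nu - mu) * cc_pen {..<n} r (cc_sol n r a mu)"
proof -
  have r0: "\<And>k. k \<in> {..<n} \<Longrightarrow> r k \<ge> 0" using r by (auto intro: less_imp_le)
  have "r i * (norm (cc_sol n r a nu i - cc_sol n r a mu i))^2
      \<le> (\<Sum>k<n. r k * (norm (cc_sol n r a nu k - cc_sol n r a mu k))^2)"
    using i r0 by (intro member_le_sum) auto
  also have "\<dots> \<le> (nu - mu) * cc_pen {..<n} r (cc_sol n r a mu)"
    using mu by (intro cc_min_dist_le[OF finite_lessThan r0 mu cc_sol_min[OF r mu(1)] cc_sol_min[OF r]]) auto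
  finally show ?thesis .
qed

lemma cc_sol_dist_le_of_fused:
  fixes a :: "nat \<Rightarrow> 'a::euclidean_space"
  assumes r: "\<forall>i<n. r i > 0" and mu: "0 \<le> mu" "mu \<le> nu" and i: "i < n" and j: "j < n"
    and fused: "cc_sol n r a nu i = cc_sol n r a nu j"
  shows "(norm (cc_sol n r a mu i - cc_sol n r a mu j))^2
    \<le> (nu - mu) * (2 * (1 / r i + 1 / r j) * cc_pen {..<n} r (cc_sol n r a mu))"
proof -
  define sol where "sol = cc_sol n r a"
  define D where "D = cc_pen {..<n} r (sol mu)"
  define p where "p = norm (sol nu i - sol mu i)"
  define q where "q = norm (sol nu j - sol mu j)"
  have rij: "r i > 0" "r j > 0" using r i j by auto
  have "r i * p^2 \<le> (nu - mu) * D" "r j * q^2 \<le> (nu - mu) * D"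
    unfolding p_def q_def sol_def D_def using cc_sol_coord_dist_le[OF r mu] i j by auto
  then have pq: "p^2 \<le> (nu - mu) * D / r i" "q^2 \<le> (nu - mu) * D / r j"
    using rij by (simp_all add: le_divide_eq mult.commute)
  have "sol mu i - sol mu j = (sol nu j - sol mu j) - (sol nu i - sol mu i)"
    using fused by (simp add: sol_def)
  then have "norm (sol mu i - sol mu j) \<le> p + q"
    unfolding p_def q_def by (metis add.commute norm_triangle_ineq4)
  then have "(norm (sol mu i - sol mu j))^2 \<le> (p + q)^2" by (intro power_mono) auto
  also have "\<dots> \<le> 2 * (p^2 + q^2)"
    using sum_squares_ge_zero[of "p - q" 0] by (simp add: power2_eq_square algebra_simps)
  also have "\<dots> \<le> 2 * ((nu - mu) * D / r i + (nu - mu) * D / r j)"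
    using pq by (intro mult_left_mono add_mono) auto
  also have "\<dots> = (nu - mu) * (2 * (1 / r i + 1 / r j) * D)" by (simp add: field_simps)
  finally show ?thesis unfolding sol_def D_def .
qed

lemma cc_sol_fused_at_Inf:
  fixes a :: "nat \<Rightarrow> 'a::euclidean_space"
  assumes r: "\<forall>i<n. r i > 0" and i: "i < n" and j: "j < n"
    and S: "S = {mu. 0 \<le> mu \<and> cc_sol n r a mu i = cc_sol n r a mu j}" and ne: "S \<noteq> {}"
  shows "cc_sol n r a (Inf S) i = cc_sol n r a (Inf S) j"
proof -
  define t where "t = Inf S"
  define M where "M = 2 * (1 / r i + 1 / r j) * cc_pen {..<n} r (cc_sol n r a t)"
  have bdd: "bdd_below S" unfolding S by (rule bdd_belowI[of _ 0]) auto
  have t: "0 \<le> t" unfolding t_def using ne by (intro cInf_greatest) (auto simp: S)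
  have "cc_pen {..<n} r (cc_sol n r a t) \<ge> 0" using r by (intro cc_pen_nonneg) (auto intro: less_imp_le)
  moreover have "1 / r i + 1 / r j \<ge> 0" using r i j by (simp add: less_imp_le)
  ultimately have M: "M \<ge> 0" unfolding M_def by simp
  have "(norm (cc_sol n r a t i - cc_sol n r a t j))^2 \<le> 0 + e * M" if e: "0 < e" "e \<le> 1" for e
  proof -
    obtain nu where nu: "nu \<in> S" "nu < t + e"
      using cInf_less_iff[OF ne bdd, of "t + e"] e unfolding t_def by auto
    have "t \<le> nu" unfolding t_def by (rule cInf_lower[OF nu(1) bdd])
    then have "(norm (cc_sol n r a t i - cc_sol n r a t j))^2 \<le> (nu - t) * M"
      unfolding M_def using cc_sol_dist_le_of_fused[of n r t nu i j a] r t i j nu(1) by (simp add: S)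
    also have "\<dots> \<le> e * M" using nu(2) M by (intro mult_right_mono) auto
    finally show ?thesis by simp
  qed
  then have "(norm (cc_sol n r a t i - cc_sol n r a t j))^2 \<le> 0" by (rule le_of_le_add_mult[OF M])
  then show ?thesis unfolding t_def by simp
qed

lemma exists_fusion_value_between:
  fixes a :: "nat \<Rightarrow> 'a::euclidean_space"
  assumes r: "\<forall>i<n. r i > 0" and mu: "0 \<le> mu" "mu \<le> nu" and i: "i < n" and j: "j < n"
    and apart: "cc_sol n r a mu i \<noteq> cc_sol n r a mu j" and fused: "cc_sol n r a nu i = cc_sol n r a nu j"
  shows "\<exists>t. mu < t \<and> t \<le> nu \<and> fusion_value n r a t"
proof -
  define S where "S = {lam. 0 \<le> lam \<and> cc_sol n r a lam i = cc_sol n r a lam j}"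
  define t where "t = Inf S"
  have "nu \<in> S" unfolding S_def using mu fused by simp
  have bdd: "bdd_below S" unfolding S_def by (rule bdd_belowI[of _ 0]) auto
  have lower: "t \<le> lam" if "lam \<in> S" for lam unfolding t_def by (rule cInf_lower[OF that bdd])
  have t0: "0 \<le> t" unfolding t_def using \<open>nu \<in> S\<close> by (intro cInf_greatest) (auto simp: S_def)
  have fused_t: "cc_sol n r a t i = cc_sol n r a t j"
    unfolding t_def using cc_sol_fused_at_Inf[OF r i j S_def] \<open>nu \<in> S\<close> by blast
  have "mu < t"
  proof (rule ccontr)
    assume "\<not> mu < t"
    then show False using cc_sol_fusion_persists[OF r t0 _ i j fused_t] apart by simp
  qed
  moreover have "fusion_value n r a t"
    unfolding fusion_value_def
  proof (intro conjI exI allI impI)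
    show "0 < t" using \<open>mu < t\<close> mu by simp
    show "i < n" "j < n" "i \<noteq> j" "cc_sol n r a t i = cc_sol n r a t j" using i j apart fused_t by auto
    show "cc_sol n r a lam i \<noteq> cc_sol n r a lam j" if "0 \<le> lam \<and> lam < t" for lam
      using lower[of lam] that unfolding S_def by auto
  qed
  ultimately show ?thesis using lower[OF \<open>nu \<in> S\<close>] by blast
qed

lemma cc_sol_eq_reduced_min:
  fixes n K :: nat and a xh :: "nat \<Rightarrow> 'a::euclidean_space"
  assumes r: "\<forall>i<n. r i > 0" and lam: "0 \<le> lam"
    and cl: "\<And>i. i < n \<Longrightarrow> cl i < K" and C: "\<And>k. k < K \<Longrightarrow> C k = {i. i < n \<and> cl i = k}"
    and ne: "\<And>k. k < K \<Longrightarrow> C k \<noteq> {}"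
    and const: "\<And>i j. i < n \<Longrightarrow> j < n \<Longrightarrow> cl i = cl j \<Longrightarrow> cc_sol n r a lam i = cc_sol n r a lam j"
    and xh: "\<And>y. cc_obj {..<K} (red_w r C) (red_a r a C) lam xh \<le> cc_obj {..<K} (red_w r C) (red_a r a C) lam y"
    and i: "i < n"
  shows "xh (cl i) = cc_sol n r a lam i"
proof -
  define X where "X = cc_sol n r a lam"
  define Xh where "Xh k = X (SOME i. i < n \<and> cl i = k)" for k
  have X_Xh: "X i = Xh (cl i)" if "i < n" for i
  proof -
    have "(SOME j. j < n \<and> cl j = cl i) < n \<and> cl (SOME j. j < n \<and> cl j = cl i) = cl i"
      using that by (rule someI_ex[of "\<lambda>j. j < n \<and> cl j = cl i", OF exI, OF conjI]) simp
    then show ?thesis unfolding Xh_def X_def using const[OF that, of "SOME j. j < n \<and> cl j = cl i"] by simp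
  qed
  have r': "\<And>i. i < n \<Longrightarrow> r i > 0" using r by simp
  define E where "E = (\<Sum>k<K. (\<Sum>i\<in>C k. r i * (norm (a i))^2) - red_w r C k * (norm (red_a r a C k))^2) / 2"
  have lift: "cc_obj {..<n} r a lam (\<lambda>i. h (cl i)) = cc_obj {..<K} (red_w r C) (red_a r a C) lam h + E" for h
    unfolding E_def by (rule cc_obj_lift[OF cl C ne r'])
  have lifted_min: "cc_obj {..<n} r a lam (\<lambda>i. xh (cl i)) \<le> cc_obj {..<n} r a lam z" for z
  proof -
    have "cc_obj {..<n} r a lam (\<lambda>i. xh (cl i)) \<le> cc_obj {..<n} r a lam (\<lambda>i. Xh (cl i))"
      unfolding lift using xh[of Xh] by simp
    also have "\<dots> = cc_obj {..<n} r a lam X" by (rule cc_obj_cong) (auto simp: X_Xh)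
    also have "\<dots> \<le> cc_obj {..<n} r a lam z" unfolding X_def by (rule cc_sol_min[OF r lam])
    finally show ?thesis .
  qed
  show ?thesis
    using cc_min_unique[OF finite_lessThan _ lam lifted_min cc_sol_min[OF r lam], of i] r i by simp
qed

theorem lemma6p3:
  fixes n K :: nat and r :: "nat \<Rightarrow> real" and a :: "nat \<Rightarrow> 'a::euclidean_space"
    and lam lam1 :: real and C :: "nat \<Rightarrow> nat set" and xh :: "nat \<Rightarrow> 'a"
  assumes "n \<ge> 2"
    and "\<forall>i<n. r i > 0"
    and "lam > 0"
    and "\<not> fusion_value n r a lam"
    and "(fusion_value n r a lam1 \<and> lam1 < lam \<and>
            (\<forall>mu. fusion_value n r a mu \<longrightarrow> \<not> (lam1 < mu \<and> mu < lam)))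
         \<or> (lam1 = 0 \<and> (\<forall>mu. fusion_value n r a mu \<longrightarrow> \<not> mu < lam))"
    and "bij_betw C {..<K} (clusters n (cc_sol n r a lam1))"
    and "\<forall>y. cc_obj {..<K} (red_w r C) (red_a r a C) lam xh
              \<le> cc_obj {..<K} (red_w r C) (red_a r a C) lam y"
  shows "\<forall>k<K. \<forall>k'<K. k \<noteq> k' \<longrightarrow> xh k \<noteq> xh k'"
proof (intro allI impI notI)
  have lam1: "0 \<le> lam1" "lam1 < lam" using assms(3,5) unfolding fusion_value_def by auto
  obtain cl where cl: "\<And>i. i < n \<Longrightarrow> cl i < K" and C: "\<And>k. k < K \<Longrightarrow> C k = {i. i < n \<and> cl i = k}"
    and ne: "\<And>k. k < K \<Longrightarrow> C k \<noteq> {}"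
    and cl_iff: "\<And>i j. i < n \<Longrightarrow> j < n \<Longrightarrow> cl i = cl j \<longleftrightarrow> cc_sol n r a lam1 i = cc_sol n r a lam1 j"
    using clusters_indexing[OF assms(6)] by blast
  have const: "cc_sol n r a lam i = cc_sol n r a lam j" if "i < n" "j < n" "cl i = cl j" for i j
    using cc_sol_fusion_persists[OF assms(2) lam1(1) less_imp_le[OF lam1(2)] that(1,2)]
      cl_iff[OF that(1,2)] that(3) by simp
  have xh_cl: "xh (cl i) = cc_sol n r a lam i" if "i < n" for i
    by (rule cc_sol_eq_reduced_min[OF assms(2) _ cl C ne const assms(7)[rule_format] that])
      (use lam1 in linarith)
  fix k k' assume k: "k < K" "k' < K" "k \<noteq> k'" and eq: "xh k = xh k'"
  obtain i j where "i \<in> C k" "j \<in> C k'" using ne[OF k(1)] ne[OF k(2)] by blast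
  then have i: "i < n" "cl i = k" and j: "j < n" "cl j = k'" using C[OF k(1)] C[OF k(2)] by simp_all
  have "cc_sol n r a lam1 i \<noteq> cc_sol n r a lam1 j" using cl_iff[OF i(1) j(1)] i(2) j(2) k(3) by simp
  moreover have "cc_sol n r a lam i = cc_sol n r a lam j" using xh_cl[OF i(1)] xh_cl[OF j(1)] i(2) j(2) eq by simp
  ultimately obtain t where "lam1 < t" "t \<le> lam" "fusion_value n r a t"
    using exists_fusion_value_between[OF assms(2) lam1(1) less_imp_le[OF lam1(2)] i(1) j(1)] by blast
  then show False using assms(4,5) by (cases "t = lam") auto
qed

end
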